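(* Let $K\in\mathcal K$, $M\in\mathbb R^{r\times p}$, $q\in[0,\theta_{K,M})$, let $Q$ be the admissible solution of the first DARE with associated $S$, $L$. Then the system $$\Theta=\left[\begin{array}{c|c}A-KC&B-KD\\\hline\sqrt q(\Phi-MC)&\sqrt q(\Psi-MD)\\-S^{-1/2}L&S^{-1/2}\end{array}\right]$$ is inner, i.e. $\widehat\Theta(\omega)^*\widehat\Theta(\omega)=I_m$ for all $\omega\in[-\pi,\pi]$. Consequently, under the noise generation scenario $W=G_{K,S,L}V$, the estimation error $\widetilde z_k=z_k-\widehat z_k$ of the estimator $E_{K,M}$ satisfies $$q\,\mathbf E|\widetilde z_0|^2+m=\mathbf E|w_0|^2=\mathrm{Tr}(LPL^T+S),$$ where $P=\mathrm{cov}(\widetilde x_0)$ is the stationary state covariance of $G_{K,S,L}$.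
   Context: Plant: $x_{k+1}=Ax_k+Bw_k$, $y_k=Cx_k+Dw_k$, $z_k=\Phi x_k+\Psi w_k$ ($x_k\in\mathbb R^n$, $w_k\in\mathbb R^m$, $y_k\in\mathbb R^p$, $z_k\in\mathbb R^r$), $\rho(A)<1$, $D$ of full row rank. $V$ is an $m$-dimensional Gaussian white noise sequence (independent, zero mean, identity covariance). Notation: $[\,\alpha\mid\beta;\gamma\mid\delta\,]$ denotes the LDTI system $s_{k+1}=\alpha s_k+\beta u_k$, output $\gamma s_k+\delta u_k$, with transfer function evaluated on the unit circle as $\widehat\Theta(\omega)=\delta+\gamma e^{i\omega}(I-e^{i\omega}\alpha)^{-1}\beta$. $\mathcal K=\{K:\rho(A-KC)<1\}$; $\mathcal L_K=\{L:\rho(A-KC+(B-KD)L)<1\}$. $E_{K,M}$: $\widehat x_{k+1}=(A-KC)\widehat x_k+Ky_k$, $\widehat z_k=(\Phi-MC)\widehat x_k+My_k$; its error operator $\Delta_{K,M}=[\,A-KC\mid B-KD;\ \Phi-MC\mid\Psi-MD\,]$ with state $\widetilde x_k=x_k-\widehat x_k$; $\theta_{K,M}=\|\Delta_{K,M}\|_\infty^{-2}$. $G_{K,S,L}=[\,A-KC+(B-KD)L\mid(B-KD)\sqrt S;\ L\mid\sqrt S\,]$, i.e. $w_k=L\widetilde x_k+\sqrt S v_k$. First DARE: $Q=(A-KC)^TQ(A-KC)+q(\Phi-MC)^T(\Phi-MC)+L^TS^{-1}L$ with $S:=(I_m-(B-KD)^TQ(B-KD)-q(\Psi-MD)^T(\Psi-MD))^{-1}$,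 $L:=S((B-KD)^TQ(A-KC)+q(\Psi-MD)^T(\Phi-MC))$; admissible means $Q$ symmetric positive semidefinite, $S$ symmetric positive definite, $L\in\mathcal L_K$ (it exists uniquely for $q\in[0,\theta_{K,M})$). *)

theory Defs
  imports "HOL-Analysis.Analysis" "HOL-Probability.Probability"
begin

definition cmat :: "real^'n^'m \<Rightarrow> complex^'n^'m" where
  "cmat A = (\<chi> i j. complex_of_real (A $ i $ j))"

definition ctranspose :: "complex^'n^'m \<Rightarrow> complex^'m^'n" where
  "ctranspose A = (\<chi> i j. cnj (A $ j $ i))"

definition spec_rad :: "real^'n^'n \<Rightarrow> real" where
  "spec_rad A = Max {cmod l | l. det (mat l - cmat A) = 0}"

definition sym_mat :: "real^'n^'n \<Rightarrow> bool" where
  "sym_mat A \<longleftrightarrow> transpose A = A"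

definition psd :: "real^'n^'n \<Rightarrow> bool" where
  "psd A \<longleftrightarrow> sym_mat A \<and> (\<forall>x. 0 \<le> x \<bullet> (A *v x))"

definition pd :: "real^'n^'n \<Rightarrow> bool" where
  "pd A \<longleftrightarrow> sym_mat A \<and> (\<forall>x. x \<noteq> 0 \<longrightarrow> 0 < x \<bullet> (A *v x))"

definition msqrt :: "real^'n^'n \<Rightarrow> real^'n^'n" where
  "msqrt S = (THE R. psd R \<and> R ** R = S)"

definition msqrt_inv :: "real^'n^'n \<Rightarrow> real^'n^'n" where
  "msqrt_inv S = matrix_inv (msqrt S)"

definition tf :: "real^'s^'s \<Rightarrow> real^'u^'s \<Rightarrow> real^'s^'o \<Rightarrow> real^'u^'o \<Rightarrow> real \<Rightarrow> complex^'u^'o" where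
  "tf \<alpha> \<beta> \<gamma> \<delta> \<omega> =
     cmat \<delta> + cmat \<gamma> ** mat (exp (\<i> * complex_of_real \<omega>))
       ** matrix_inv (mat 1 - mat (exp (\<i> * complex_of_real \<omega>)) ** cmat \<alpha>) ** cmat \<beta>"

definition inner_sys :: "real^'s^'s \<Rightarrow> real^'u^'s \<Rightarrow> real^'s^'o \<Rightarrow> real^'u^'o \<Rightarrow> bool" where
  "inner_sys \<alpha> \<beta> \<gamma> \<delta> \<longleftrightarrow>
     (\<forall>\<omega>\<in>{-pi..pi}. ctranspose (tf \<alpha> \<beta> \<gamma> \<delta> \<omega>) ** tf \<alpha> \<beta> \<gamma> \<delta> \<omega> = mat 1)"

definition hinf_norm :: "real^'s^'s \<Rightarrow> real^'u^'s \<Rightarrow> real^'s^'o \<Rightarrow> real^'u^'o \<Rightarrow> real" where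
  "hinf_norm \<alpha> \<beta> \<gamma> \<delta> = (SUP \<omega>\<in>{-pi..pi}. onorm (\<lambda>x. tf \<alpha> \<beta> \<gamma> \<delta> \<omega> *v x))"

definition Kset :: "real^'n^'n \<Rightarrow> real^'n^'p \<Rightarrow> (real^'p^'n) set" where
  "Kset A C = {K. spec_rad (A - K ** C) < 1}"

definition Lset :: "real^'n^'n \<Rightarrow> real^'m^'n \<Rightarrow> real^'n^'p \<Rightarrow> real^'m^'p \<Rightarrow> real^'p^'n \<Rightarrow> (real^'n^'m) set" where
  "Lset A B C D K = {L. spec_rad (A - K ** C + (B - K ** D) ** L) < 1}"

definition theta :: "real^'n^'n \<Rightarrow> real^'m^'n \<Rightarrow> real^'n^'p \<Rightarrow> real^'m^'p \<Rightarrow> real^'n^'r \<Rightarrow> real^'m^'r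
     \<Rightarrow> real^'p^'n \<Rightarrow> real^'p^'r \<Rightarrow> ereal" where
  "theta A B C D \<Phi> \<Psi> K M =
     (let h = hinf_norm (A - K ** C) (B - K ** D) (\<Phi> - M ** C) (\<Psi> - M ** D)
      in if h = 0 then \<infinity> else ereal (1 / h\<^sup>2))"

definition Sinv_of :: "real^'m^'n \<Rightarrow> real^'m^'p \<Rightarrow> real^'m^'r \<Rightarrow> real^'p^'n \<Rightarrow> real^'p^'r
     \<Rightarrow> real \<Rightarrow> real^'n^'n \<Rightarrow> real^'m^'m" where
  "Sinv_of B D \<Psi> K M q Q =
     mat 1 - transpose (B - K ** D) ** Q ** (B - K ** D) - q *\<^sub>R (transpose (\<Psi> - M ** D) ** (\<Psi> - M ** D))"

definition S_of :: "real^'m^'n \<Rightarrow> real^'m^'p \<Rightarrow> real^'m^'r \<Rightarrow> real^'p^'n \<Rightarrow> real^'p^'r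
     \<Rightarrow> real \<Rightarrow> real^'n^'n \<Rightarrow> real^'m^'m" where
  "S_of B D \<Psi> K M q Q = matrix_inv (Sinv_of B D \<Psi> K M q Q)"

definition L_of :: "real^'n^'n \<Rightarrow> real^'m^'n \<Rightarrow> real^'n^'p \<Rightarrow> real^'m^'p \<Rightarrow> real^'n^'r \<Rightarrow> real^'m^'r
     \<Rightarrow> real^'p^'n \<Rightarrow> real^'p^'r \<Rightarrow> real \<Rightarrow> real^'n^'n \<Rightarrow> real^'n^'m" where
  "L_of A B C D \<Phi> \<Psi> K M q Q =
     S_of B D \<Psi> K M q Q ** (transpose (B - K ** D) ** Q ** (A - K ** C)
        + q *\<^sub>R (transpose (\<Psi> - M ** D) ** (\<Phi> - M ** C)))"

definition admissible_DARE1 :: "real^'n^'n \<Rightarrow> real^'m^'n \<Rightarrow> real^'n^'p \<Rightarrow> real^'m^'p \<Rightarrow> real^'n^'r \<Rightarrow> real^'m^'r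
     \<Rightarrow> real^'p^'n \<Rightarrow> real^'p^'r \<Rightarrow> real \<Rightarrow> real^'n^'n \<Rightarrow> bool" where
  "admissible_DARE1 A B C D \<Phi> \<Psi> K M q Q \<longleftrightarrow>
     (let S = S_of B D \<Psi> K M q Q; L = L_of A B C D \<Phi> \<Psi> K M q Q in
      invertible (Sinv_of B D \<Psi> K M q Q) \<and>
      Q = transpose (A - K ** C) ** Q ** (A - K ** C) + q *\<^sub>R (transpose (\<Phi> - M ** C) ** (\<Phi> - M ** C))
          + transpose L ** Sinv_of B D \<Psi> K M q Q ** L \<and>
      psd Q \<and> pd S \<and> L \<in> Lset A B C D K)"

definition cov_mat :: "'a measure \<Rightarrow> ('a \<Rightarrow> real^'n) \<Rightarrow> real^'n^'n" where
  "cov_mat Pr X = (\<chi> i j. integral\<^sup>L Pr (\<lambda>\<omega>. (X \<omega> $ i - integral\<^sup>L Pr (\<lambda>\<omega>'. X \<omega>' $ i))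
                                        * (X \<omega> $ j - integral\<^sup>L Pr (\<lambda>\<omega>'. X \<omega>' $ j))))"

end

theory Submission
  imports Defs "HOL-Computational_Algebra.Polynomial"
begin

text \<open>
  Write \<alpha> = A - KC, \<beta> = B - KD and let \<gamma>, \<delta> be the output matrices of \<Theta>. Because
  (S^(-1/2))^T S^(-1/2) = S^(-1), the first DARE together with the definition of L says exactly that
  \<alpha>^T Q \<alpha> + \<gamma>^T \<gamma> = Q, \<beta>^T Q \<beta> + \<delta>^T \<delta> = I and \<alpha>^T Q \<beta> + \<gamma>^T \<delta> = 0: the realization of \<Theta> is
  lossless with storage matrix Q. On the unit circle I - e^(i\<omega>) \<alpha> is invertible since \<rho>(\<alpha>) < 1,
  and these identities make \<Theta> inner. Pointwise they give the energy balance
  x'^T Q x' + |\<gamma> x + \<delta> w|^2 = x^T Q x + |w|^2 for x' = \<alpha> x + \<beta> w. Along the estimation error,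
  \<gamma> x + \<delta> w stacks \<surd>q times the output error and the noise v. Stationarity of the mean together
  with \<rho>(\<alpha> + \<beta> L) < 1 forces the error to be centred, so its second moments are stationary too and
  the storage terms cancel in expectation, while E|v|^2 = m. Finally w = L x + S^(1/2) v with v
  independent of the current state gives E|w|^2 = tr(L P L^T + S).
\<close>

section \<open>Matrix algebra\<close>

lemma matrix_add_rdistrib: "((B::'a::ring_1^'n^'m) + C) ** A = B ** A + C ** A"
  by (simp add: vec_eq_iff matrix_matrix_mult_def sum.distrib algebra_simps)

lemma matrix_diff_ldistrib: "(A::'a::ring_1^'n^'m) ** (B - C) = A ** B - A ** C"
  by (simp add: vec_eq_iff matrix_matrix_mult_def sum_subtractf algebra_simps)

lemma matrix_diff_rdistrib: "((B::'a::ring_1^'n^'m) - C) ** A = B ** A - C ** A"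
  by (simp add: vec_eq_iff matrix_matrix_mult_def sum_subtractf algebra_simps)

lemma matrix_uminus_left: "(- A) ** B = - (A ** (B::'a::ring_1^'n^'m))"
  by (simp add: vec_eq_iff matrix_matrix_mult_def sum_negf)

lemma matrix_uminus_right: "A ** (- B) = - (A ** (B::'a::ring_1^'n^'m))"
  by (simp add: vec_eq_iff matrix_matrix_mult_def sum_negf)

lemma transpose_add: "transpose (A + B) = transpose A + transpose (B::'a::ab_group_add^'n^'m)"
  by (simp add: transpose_def vec_eq_iff)

lemma transpose_diff: "transpose (A - B) = transpose A - transpose (B::'a::ab_group_add^'n^'m)"
  by (simp add: transpose_def vec_eq_iff)

lemma transpose_uminus: "transpose (- A) = - transpose (A::'a::ab_group_add^'n^'m)"
  by (simp add: transpose_def vec_eq_iff)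

lemma matrix_vector_mult_uminus_left: "(- A) *v x = - (A *v (x :: 'a::ring_1^'n))"
  by (simp add: vec_eq_iff matrix_vector_mult_def sum_negf)

lemma scaleR_matrix_vector_mult: "(c *\<^sub>R A) *v x = c *\<^sub>R (A *v x)" for A :: "real^'n^'m"
  by (simp add: vec_eq_iff matrix_vector_mult_def sum_distrib_left mult_ac)

lemma det_mat: "det (mat c :: 'a::comm_ring_1^'n^'n) = c ^ CARD('n)"
  by (subst det_diagonal) (auto simp: mat_def)

lemma mat_mult_left: "mat c ** M = (\<chi> i j. c * M $ i $ j)" for M :: "'a::comm_ring_1^'n^'m"
  by (simp add: vec_eq_iff matrix_matrix_mult_def mat_def if_distrib if_distribR sum.delta'
      cong: if_cong)

lemma mat_mult_right: "M ** mat c = (\<chi> i j. c * M $ i $ j)" for M :: "'a::comm_ring_1^'n^'m"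
  by (simp add: vec_eq_iff matrix_matrix_mult_def mat_def if_distrib if_distribR sum.delta
      mult.commute
      cong: if_cong)

lemma matrix_inv:
  assumes "invertible (A :: 'a::semiring_1^'n^'n)"
  shows "A ** matrix_inv A = mat 1" "matrix_inv A ** A = mat 1"
proof -
  have "A ** matrix_inv A = mat 1 \<and> matrix_inv A ** A = mat 1"
    using assms unfolding invertible_def matrix_inv_def by (rule someI_ex)
  then show "A ** matrix_inv A = mat 1" "matrix_inv A ** A = mat 1" by auto
qed

lemma inner_matrix_vector_transpose:
  fixes A :: "real^'n^'m"
  shows "(A *v x) \<bullet> y = x \<bullet> (transpose A *v y)"
  by (metis dot_lmul_matrix transpose_matrix_vector transpose_transpose)

lemma inner_matrix_vector_mult:
  fixes A :: "real^'n^'k" and B :: "real^'m^'k"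
  shows "(A *v x) \<bullet> (B *v y) = x \<bullet> ((transpose A ** B) *v y)"
  by (simp add: inner_matrix_vector_transpose matrix_vector_mul_assoc)

lemma symmetric_matrix_inner_commute:
  fixes S :: "real^'n^'n"
  assumes "transpose S = S"
  shows "(S *v x) \<bullet> y = x \<bullet> (S *v y)"
  using inner_matrix_vector_transpose[of S x y] assms by simp

lemma quadratic_form_mult_add:
  fixes A :: "real^'n^'k" and B :: "real^'m^'k" and P :: "real^'k^'k"
  assumes "transpose P = P"
  shows "(A *v s + B *v u) \<bullet> (P *v (A *v s + B *v u))
    = s \<bullet> ((transpose A ** P ** A) *v s) + 2 * (s \<bullet> ((transpose A ** P ** B) *v u))
      + u \<bullet> ((transpose B ** P ** B) *v u)"
proof -
  have "(B *v u) \<bullet> (P *v (A *v s)) = s \<bullet> ((transpose A ** P ** B) *v u)"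
    using assms inner_matrix_vector_transpose[of "transpose B ** P ** A" s u]
    by (simp add: inner_commute inner_matrix_vector_mult matrix_transpose_mul matrix_mul_assoc
        matrix_vector_mul_assoc)
  then show ?thesis
    by (simp add: inner_add_left inner_add_right matrix_vector_right_distrib
        inner_matrix_vector_mult
        matrix_vector_mul_assoc matrix_mul_assoc)
qed

section \<open>Square roots of positive semidefinite matrices\<close>

lemma quadratic_nonpos_imp_linear_coeff_zero:
  fixes a b :: real
  assumes "\<And>t. a * t + b * t\<^sup>2 \<le> 0"
  shows "a = 0"
proof (rule ccontr)
  assume "a \<noteq> 0"
  define c where "c = \<bar>b\<bar> + 1"
  have c: "c > 0" "1 + b / c > 0"
    unfolding c_def by (auto simp: field_simps abs_if split: if_splits)
  have "a * (a / c) + b * (a / c)\<^sup>2 = a\<^sup>2 / c * (1 + b / c)"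
    using c by (simp add: field_simps power2_eq_square)
  also have "\<dots> > 0" using \<open>a \<noteq> 0\<close> c by simp
  finally show False using assms[of "a / c"] by simp
qed

lemma symmetric_rayleigh_max_orthogonal:
  fixes S :: "real^'n^'n"
  assumes sym: "transpose S = S" and V: "subspace V"
    and u: "u \<in> V" "norm u = 1"
    and max: "\<And>y. y \<in> V \<Longrightarrow> norm y = 1 \<Longrightarrow> y \<bullet> (S *v y) \<le> u \<bullet> (S *v u)"
    and w: "w \<in> V" "w \<bullet> u = 0"
  shows "w \<bullet> (S *v u) = 0"
proof -
  let ?f = "\<lambda>y. y \<bullet> (S *v y)"
  have "(2 * (w \<bullet> (S *v u))) * t + (?f w - ?f u * (norm w)\<^sup>2) * t\<^sup>2 \<le> 0" for t
  proof -
    define y where "y = u + t *\<^sub>R w"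
    have ny: "(norm y)\<^sup>2 = 1 + t\<^sup>2 * (norm w)\<^sup>2"
      using u(2) w(2) unfolding y_def power2_norm_eq_inner norm_eq_1
      by (simp add: inner_add_left inner_add_right inner_commute power2_eq_square)
    hence pos: "(norm y)\<^sup>2 > 0" by (simp add: add_pos_nonneg)
    have "?f (y /\<^sub>R norm y) \<le> ?f u"
      using pos u(1) w(1) V by (intro max) (auto simp: y_def subspace_add subspace_scale)
    moreover have "?f (y /\<^sub>R norm y) = ?f y / (norm y)\<^sup>2"
      by (simp add: matrix_vector_mult_scaleR power2_eq_square field_simps)
    ultimately have "?f y \<le> ?f u * (1 + t\<^sup>2 * (norm w)\<^sup>2)"
      using pos unfolding ny by (simp add: divide_le_eq)
    moreover have "?f y = ?f u + 2 * t * (w \<bullet> (S *v u)) + t\<^sup>2 * ?f w"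
      unfolding y_def using symmetric_matrix_inner_commute[OF sym, of w u]
      by (simp add: matrix_vector_right_distrib matrix_vector_mult_scaleR inner_add_left
          inner_add_right inner_commute power2_eq_square algebra_simps)
    ultimately show ?thesis by (simp add: algebra_simps)
  qed
  from quadratic_nonpos_imp_linear_coeff_zero[OF this] show ?thesis by simp
qed

lemma symmetric_invariant_subspace_eigenvector:
  fixes S :: "real^'n^'n"
  assumes sym: "transpose S = S" and V: "subspace V" and ne: "V \<noteq> {0}"
    and inv: "\<And>x. x \<in> V \<Longrightarrow> S *v x \<in> V"
  shows "\<exists>u\<in>V. norm u = 1 \<and> S *v u = (u \<bullet> (S *v u)) *\<^sub>R u"
proof -
  define K where "K = sphere 0 1 \<inter> V"
  obtain x where "x \<in> V" "x \<noteq> 0" using ne V subspace_0 by blast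
  then have "x /\<^sub>R norm x \<in> K" using V unfolding K_def by (simp add: subspace_scale)
  then have "K \<noteq> {}" by blast
  moreover have "compact K"
    unfolding K_def by (rule compact_Int_closed) (auto simp: V closed_subspace)
  moreover have "continuous_on K (\<lambda>y. y \<bullet> (S *v y))"
    by (intro continuous_intros linear_continuous_on matrix_vector_mul_linear)
  ultimately obtain u where u: "u \<in> K" "\<And>y. y \<in> K \<Longrightarrow> y \<bullet> (S *v y) \<le> u \<bullet> (S *v u)"
    using continuous_attains_sup[of K "\<lambda>y. y \<bullet> (S *v y)"] by blast
  have uV: "u \<in> V" and nu: "norm u = 1" using u(1) by (auto simp: K_def)
  have max: "y \<bullet> (S *v y) \<le> u \<bullet> (S *v u)" if "y \<in> V" "norm y = 1" for y
    using u(2) that by (simp add: K_def)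
  define r where "r = S *v u - (u \<bullet> (S *v u)) *\<^sub>R u"
  have rV: "r \<in> V" unfolding r_def using inv uV V by (simp add: subspace_diff subspace_scale)
  have "u \<bullet> r = 0" unfolding r_def using nu by (simp add: inner_diff_right dot_square_norm)
  hence ru: "r \<bullet> u = 0" by (simp add: inner_commute)
  have "r \<bullet> r = r \<bullet> (S *v u) - (u \<bullet> (S *v u)) * (r \<bullet> u)"
    unfolding r_def by (simp add: inner_diff_right)
  also have "\<dots> = r \<bullet> (S *v u)" using ru by simp
  also have "\<dots> = 0"
    by (rule symmetric_rayleigh_max_orthogonal[OF sym V uV nu max rV ru])
  finally show ?thesis using uV nu unfolding r_def by auto
qed

lemma span_insert_orthogonal_complement:
  fixes V :: "(real^'n) set"
  assumes V: "subspace V" and u: "u \<in> V" "u \<bullet> u = 1" and B: "span B = {x \<in> V. u \<bullet> x = 0}"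
  shows "span (insert u B) = V"
proof
  show "span (insert u B) \<subseteq> V"
    using B span_superset[of B] u(1) V by (intro span_minimal) auto
  show "V \<subseteq> span (insert u B)"
  proof
    fix x assume "x \<in> V"
    then have "x - (u \<bullet> x) *\<^sub>R u \<in> span B"
      using u V unfolding B by (simp add: subspace_diff subspace_scale inner_diff_right)
    then have "(x - (u \<bullet> x) *\<^sub>R u) + (u \<bullet> x) *\<^sub>R u \<in> span (insert u B)"
      by (meson span_add span_base span_mono span_mul insertI1 subset_insertI subsetD)
    then show "x \<in> span (insert u B)" by simp
  qed
qed

lemma symmetric_invariant_subspace_orthonormal_eigenbasis:
  fixes S :: "real^'n^'n"
  assumes sym: "transpose S = S"
  shows "subspace V \<Longrightarrow> (\<And>x. x \<in> V \<Longrightarrow> S *v x \<in> V) \<Longrightarrow>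
    \<exists>B. finite B \<and> B \<subseteq> V \<and> pairwise orthogonal B \<and>
        (\<forall>b\<in>B. norm b = 1 \<and> S *v b = (b \<bullet> (S *v b)) *\<^sub>R b) \<and> span B = V"
proof (induction "dim V" arbitrary: V rule: less_induct)
  case less
  show ?case
  proof (cases "V = {0}")
    case True
    then show ?thesis by (intro exI[of _ "{}"]) auto
  next
    case False
    obtain u where u: "u \<in> V" "norm u = 1" "S *v u = (u \<bullet> (S *v u)) *\<^sub>R u"
      using symmetric_invariant_subspace_eigenvector[OF sym less.prems(1) False less.prems(2)]
          by blast
    define V' where "V' = {x \<in> V. u \<bullet> x = 0}"
    have V': "subspace V'" "V' \<subseteq> V"
      using less.prems(1) unfolding V'_def subspace_def by (auto simp: inner_add_right)
    have uu: "u \<bullet> u = 1" using u(2) by (simp add: norm_eq_1)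
    then have "u \<notin> V'" unfolding V'_def by auto
    then have "V' \<subset> V" using V'(2) u(1) by blast
    then have "span V' \<subset> span V"
      using V'(1) less.prems(1) by (simp add: span_eq_iff[THEN iffD2])
    then have "dim V' < dim V" by (rule dim_psubset)
    moreover have "S *v x \<in> V'" if "x \<in> V'" for x
    proof -
      have "u \<bullet> (S *v x) = (S *v u) \<bullet> x"
        using symmetric_matrix_inner_commute[OF sym, of u x] by simp
      also have "\<dots> = (u \<bullet> (S *v u)) * (u \<bullet> x)" by (subst u(3)) simp
      finally show ?thesis using that less.prems(2) unfolding V'_def by auto
    qed
    ultimately obtain B' where B': "finite B'" "B' \<subseteq> V'" "pairwise orthogonal B'"
      "\<forall>b\<in>B'. norm b = 1 \<and> S *v b = (b \<bullet> (S *v b)) *\<^sub>R b" "span B' = V'"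
      using less.hyps V'(1) by blast
    have "span (insert u B') = V"
      by (rule span_insert_orthogonal_complement[OF less.prems(1) u(1) uu B'(5)[unfolded V'_def]])
    moreover have "pairwise orthogonal (insert u B')"
      using B'(2,3) unfolding pairwise_def V'_def orthogonal_def by (auto simp: inner_commute)
    ultimately show ?thesis
      using B' u V'(2) by (intro exI[of _ "insert u B'"]) auto
  qed
qed

lemma orthonormal_sum_coeff:
  fixes B :: "(real^'n) set"
  assumes "finite B" "pairwise orthogonal B" "\<forall>b\<in>B. norm b = 1" "c \<in> B"
  shows "c \<bullet> (\<Sum>b\<in>B. g b *\<^sub>R b) = g c"
proof -
  have "c \<bullet> (\<Sum>b\<in>B. g b *\<^sub>R b) = (\<Sum>b\<in>B. g b * (c \<bullet> b))"
    by (simp add: inner_sum_right)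
  also have "\<dots> = (\<Sum>b\<in>{c}. g b * (c \<bullet> b))"
    using assms(1,2,4) by (intro sum.mono_neutral_right) (auto simp: pairwise_def orthogonal_def)
  also have "\<dots> = g c" using assms(3,4) by (simp add: norm_eq_1)
  finally show ?thesis .
qed

lemma orthonormal_basis_expansion:
  fixes B :: "(real^'n) set"
  assumes "finite B" "pairwise orthogonal B" "\<forall>b\<in>B. norm b = 1" "span B = UNIV"
  shows "x = (\<Sum>b\<in>B. (b \<bullet> x) *\<^sub>R b)"
proof -
  define y where "y = x - (\<Sum>b\<in>B. (b \<bullet> x) *\<^sub>R b)"
  have "orthogonal c y" if "c \<in> B" for c
    using orthonormal_sum_coeff[OF assms(1-3) that, of "\<lambda>b. b \<bullet> x"]
    unfolding y_def orthogonal_def by (simp add: inner_diff_right)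
  then have orth: "orthogonal y c" if "c \<in> B" for c using that by (simp add: orthogonal_commute)
  have "y \<in> span B" using assms(4) by simp
  from orthogonal_to_span[OF this orth] have "orthogonal y y" .
  then show ?thesis unfolding y_def orthogonal_def by simp
qed

lemma psd_symmetric: "psd R \<Longrightarrow> transpose R = R"
  by (simp add: psd_def sym_mat_def)

lemma psd_sqrt_exists:
  fixes S :: "real^'n^'n"
  assumes "psd S"
  shows "\<exists>R. psd R \<and> R ** R = S"
proof -
  obtain B where B: "finite B" "pairwise orthogonal B" "\<forall>b\<in>B. norm b = 1"
      "\<forall>b\<in>B. S *v b = (b \<bullet> (S *v b)) *\<^sub>R b" "span B = UNIV"
    using symmetric_invariant_subspace_orthonormal_eigenbasis[OF psd_symmetric[OF assms], of UNIV]
    by auto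
  define ev where "ev b = b \<bullet> (S *v b)" for b
  have ev: "ev b \<ge> 0" for b using assms by (simp add: psd_def ev_def)
  have eig: "S *v b = ev b *\<^sub>R b" if "b \<in> B" for b using B(4) that unfolding ev_def by blast
  define R :: "real^'n^'n" where "R = (\<chi> i j. \<Sum>b\<in>B. sqrt (ev b) * b $ i * b $ j)"
  have Rx: "R *v x = (\<Sum>b\<in>B. (sqrt (ev b) * (b \<bullet> x)) *\<^sub>R b)" for x
    unfolding R_def
    by (simp add: vec_eq_iff matrix_vector_mult_def inner_vec_def sum_component
        sum_distrib_left sum_distrib_right mult_ac sum.swap[of _ UNIV B])
  have "psd R"
    unfolding psd_def sym_mat_def
  proof (intro conjI allI)
    show "transpose R = R" unfolding R_def by (simp add: transpose_def vec_eq_iff mult_ac)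
    fix x :: "real^'n"
    have "x \<bullet> (R *v x) = (\<Sum>b\<in>B. sqrt (ev b) * (b \<bullet> x)\<^sup>2)"
      by (simp add: Rx inner_sum_right inner_commute power2_eq_square mult_ac)
    also have "\<dots> \<ge> 0" using ev by (intro sum_nonneg) simp
    finally show "0 \<le> x \<bullet> (R *v x)" .
  qed
  moreover have "R *v (R *v x) = S *v x" for x
  proof -
    have "b \<bullet> (R *v x) = sqrt (ev b) * (b \<bullet> x)" if "b \<in> B" for b
      unfolding Rx by (rule orthonormal_sum_coeff[OF B(1-3) that])
    then have "R *v (R *v x) = (\<Sum>b\<in>B. (ev b * (b \<bullet> x)) *\<^sub>R b)"
      using ev by (simp add: Rx[of "R *v x"] mult.assoc[symmetric] cong: sum.cong)
    also have "\<dots> = S *v (\<Sum>b\<in>B. (b \<bullet> x) *\<^sub>R b)"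
      by (simp add: vec.sum matrix_vector_mult_scaleR eig mult.commute cong: sum.cong)
    also have "\<dots> = S *v x" using orthonormal_basis_expansion[OF B(1-3,5), of x] by simp
    finally show ?thesis .
  qed
  then have "R ** R = S" unfolding matrix_eq by (metis matrix_vector_mul_assoc)
  ultimately show ?thesis by blast
qed

lemma psd_quadratic_zero_imp_kernel:
  fixes R :: "real^'n^'n"
  assumes R: "psd R" and x: "x \<bullet> (R *v x) = 0"
  shows "R *v x = 0"
proof -
  have "y \<bullet> (R *v x) = 0" for y
  proof -
    have "(-2 * (y \<bullet> (R *v x))) * t + (- (y \<bullet> (R *v y))) * t\<^sup>2 \<le> 0" for t
    proof -
      have "0 \<le> (x + t *\<^sub>R y) \<bullet> (R *v (x + t *\<^sub>R y))" using R by (simp add: psd_def)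
      also have "\<dots> = x \<bullet> (R *v x) + 2 * t * (y \<bullet> (R *v x)) + t\<^sup>2 * (y \<bullet> (R *v y))"
        using symmetric_matrix_inner_commute[OF psd_symmetric[OF R], of y x]
        by (simp add: inner_commute power2_eq_square algebra_simps)
      finally show ?thesis using x by (simp add: algebra_simps)
    qed
    from quadratic_nonpos_imp_linear_coeff_zero[OF this] show ?thesis by simp
  qed
  from this[of "R *v x"] show ?thesis by simp
qed

lemma trace_symmetric_sandwich:
  fixes D R :: "real^'n^'n"
  assumes "transpose D = D"
  shows "trace (D ** R ** D) = (\<Sum>i\<in>UNIV. (D *v axis i 1) \<bullet> (R *v (D *v axis i 1)))"
  unfolding trace_def
proof (rule sum.cong[OF refl])
  fix i
  have "(D ** R ** D) $ i $ i = ((D ** R ** D) *v axis i 1) $ i"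
    by (simp add: matrix_vector_mult_def axis_def if_distrib cong: if_cong)
  also have "\<dots> = axis i 1 \<bullet> ((D ** R ** D) *v axis i 1)"
    by (simp add: cart_eq_inner_axis inner_commute)
  also have "\<dots> = (D *v axis i 1) \<bullet> (R *v (D *v axis i 1))"
    using symmetric_matrix_inner_commute[OF assms, of "axis i 1"]
    by (simp add: matrix_vector_mul_assoc matrix_mul_assoc)
  finally show "(D ** R ** D) $ i $ i = (D *v axis i 1) \<bullet> (R *v (D *v axis i 1))" .
qed

lemma psd_sqrt_unique:
  fixes R1 R2 :: "real^'n^'n"
  assumes p1: "psd R1" and p2: "psd R2" and eq: "R1 ** R1 = R2 ** R2"
  shows "R1 = R2"
proof -
  \<comment> \<open>\<open>R1 D + D R2 = 0\<close> makes \<open>tr (D R1 D) + tr (D R2 D)\<close> vanish; both are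
    nonnegative, so \<open>D D = 0\<close>\<close>
  define D where "D = R1 - R2"
  have symD: "transpose D = D"
    unfolding D_def using p1 p2 by (simp add: transpose_diff psd_symmetric)
  have "R1 ** D + D ** R2 = 0"
    unfolding D_def using eq by (simp add: matrix_diff_ldistrib matrix_diff_rdistrib)
  then have "trace (D ** (R1 ** D + D ** R2)) = 0" by (simp add: trace_def)
  then have "trace (D ** R1 ** D) + trace (D ** R2 ** D) = 0"
    using trace_mul_sym[of "D ** R2" D]
    by (simp add: matrix_add_ldistrib trace_add matrix_mul_assoc)
  moreover have "(D *v axis i 1) \<bullet> (R *v (D *v axis i 1)) \<ge> 0" if "psd R" for R i
    using that by (simp add: psd_def)
  ultimately have "(D *v axis i 1) \<bullet> (R1 *v (D *v axis i 1)) = 0"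
    "(D *v axis i 1) \<bullet> (R2 *v (D *v axis i 1)) = 0" for i
    unfolding trace_symmetric_sandwich[OF symD] using p1 p2
    by (simp_all add: add_nonneg_eq_0_iff sum_nonneg sum_nonneg_eq_0_iff)
  then have "R1 *v (D *v axis i 1) = 0" "R2 *v (D *v axis i 1) = 0" for i
    using psd_quadratic_zero_imp_kernel p1 p2 by blast+
  then have "D *v (D *v axis i 1) = 0" for i
    unfolding D_def by (simp add: matrix_vector_mult_diff_rdistrib)
  then have "D *v axis i 1 = 0" for i
    using symmetric_matrix_inner_commute[OF symD, of "axis i 1" "D *v axis i 1"] by simp
  then have "D = 0"
    by (simp add: vec_eq_iff matrix_vector_mult_def axis_def if_distrib cong: if_cong)
  then show ?thesis unfolding D_def by simp
qed

lemma msqrt: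
  fixes S :: "real^'n^'n"
  assumes "psd S"
  shows "psd (msqrt S)" "msqrt S ** msqrt S = S"
proof -
  have "\<exists>!R. psd R \<and> R ** R = S"
    using psd_sqrt_exists[OF assms] psd_sqrt_unique by blast
  then have "psd (msqrt S) \<and> msqrt S ** msqrt S = S" unfolding msqrt_def by (rule theI')
  then show "psd (msqrt S)" "msqrt S ** msqrt S = S" by auto
qed

lemma pd_imp_psd:
  assumes "pd S"
  shows "psd S"
  unfolding psd_def
proof (intro conjI allI)
  show "sym_mat S" using assms by (simp add: pd_def)
  show "0 \<le> x \<bullet> (S *v x)" for x
    using assms unfolding pd_def by (cases "x = 0") (auto intro: less_imp_le)
qed

lemma msqrt_inv:
  fixes S :: "real^'n^'n"
  assumes "pd S"
  shows "transpose (msqrt S) = msqrt S" "msqrt S ** msqrt S = S"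
    "msqrt S ** msqrt_inv S = mat 1" "msqrt_inv S ** msqrt S = mat 1"
    "transpose (msqrt_inv S) = msqrt_inv S"
proof -
  note R = msqrt[OF pd_imp_psd[OF assms]]
  show sym: "transpose (msqrt S) = msqrt S" using R(1) by (rule psd_symmetric)
  show "msqrt S ** msqrt S = S" by (rule R(2))
  have "x = 0" if "msqrt S *v x = 0" for x
  proof -
    have "S *v x = 0" using that R(2) by (metis matrix_vector_mul_assoc matrix_vector_mult_0_right)
    then show "x = 0" using assms unfolding pd_def by force
  qed
  then have "invertible (msqrt S)"
    by (simp add: invertible_left_inverse matrix_left_invertible_ker)
  from matrix_inv[OF this]
  show inv: "msqrt S ** msqrt_inv S = mat 1" "msqrt_inv S ** msqrt S = mat 1"
    unfolding msqrt_inv_def by auto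
  have "transpose (msqrt_inv S) = transpose (msqrt_inv S) ** (msqrt S ** msqrt_inv S)"
    using inv by simp
  also have "\<dots> = transpose (msqrt S ** msqrt_inv S) ** msqrt_inv S"
    using sym by (simp add: matrix_transpose_mul matrix_mul_assoc)
  finally show "transpose (msqrt_inv S) = msqrt_inv S" using inv by simp
qed

lemma msqrt_inv_gram:
  fixes S N :: "real^'m^'m"
  assumes "pd S" and "S ** N = mat 1"
  shows "transpose (msqrt_inv S) ** msqrt_inv S = N"
proof -
  note R = msqrt_inv[OF assms(1)]
  have "msqrt_inv S ** msqrt_inv S = msqrt_inv S ** msqrt_inv S ** (S ** N)"
    using assms(2) by simp
  also have "\<dots> = msqrt_inv S ** (msqrt_inv S ** msqrt S) ** (msqrt S ** N)"
    by (metis R(2) matrix_mul_assoc)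
  also have "\<dots> = N"
    using R(4) by (simp add: matrix_mul_assoc)
  finally show ?thesis using R(5) by simp
qed

section \<open>Spectral radius\<close>

lemma cmat_nth [simp]: "cmat A $ i $ j = complex_of_real (A $ i $ j)"
  by (simp add: cmat_def)

lemma finite_eigenvalues:
  fixes A :: "real^'n^'n"
  shows "finite {l. det (mat l - cmat A) = 0}"
proof -
  \<comment> \<open>\<open>det (l I - A) = l^n det (I - A / l)\<close>, and \<open>det (I - t A)\<close> is a polynomial
    in \<open>t\<close> with value 1 at 0\<close>
  define E where "E t = (\<chi> i j. (if i = j then 1 else 0) - t * cmat A $ i $ j)" for t :: complex
  define p where "p = (\<Sum>\<pi> | \<pi> permutes (UNIV::'n set). of_int (sign \<pi>) *
      (\<Prod>i\<in>UNIV. [: (if i = \<pi> i then 1 else 0), - cmat A $ i $ \<pi> i :]))"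
  have p: "poly p t = det (E t)" for t
    unfolding p_def det_def E_def by (simp add: poly_sum poly_prod algebra_simps)
  have "E 0 = mat 1" unfolding E_def by (simp add: vec_eq_iff mat_def)
  then have "p \<noteq> 0" using p[of 0] by auto
  have "{l. det (mat l - cmat A) = 0} \<subseteq> insert 0 (inverse ` {t. poly p t = 0})"
  proof
    fix l assume l: "l \<in> {l. det (mat l - cmat A) = 0}"
    show "l \<in> insert 0 (inverse ` {t. poly p t = 0})"
    proof (cases "l = 0")
      case False
      then have "mat l - cmat A = mat l ** E (inverse l)"
        unfolding mat_mult_left E_def by (simp add: vec_eq_iff mat_def algebra_simps)
      then have "poly p (inverse l) = 0" using l False p by (simp add: det_mul det_mat)
      then show ?thesis by (intro insertI2 image_eqI[of _ _ "inverse l"]) auto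
    qed simp
  qed
  then show ?thesis
    by (rule finite_subset) (simp add: poly_roots_finite[OF \<open>p \<noteq> 0\<close>])
qed

lemma eigenvalue_le_spec_rad:
  fixes A :: "real^'n^'n"
  assumes "det (mat l - cmat A) = 0"
  shows "cmod l \<le> spec_rad A"
  unfolding spec_rad_def
proof (rule Max_ge)
  show "finite {cmod l | l. det (mat l - cmat A) = 0}"
    using finite_eigenvalues[of A] by (simp add: setcompr_eq_image)
qed (use assms in blast)

lemma spec_rad_lt_1_imp_invertible:
  fixes A :: "real^'n^'n"
  assumes "spec_rad A < 1" and "cmod z = 1"
  shows "invertible (mat 1 - mat z ** cmat A)"
proof -
  have "z \<noteq> 0" using assms(2) by auto
  then have "mat 1 - mat z ** cmat A = mat z ** (mat (inverse z) - cmat A)"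
    unfolding mat_mult_left by (simp add: vec_eq_iff mat_def algebra_simps)
  moreover have "det (mat (inverse z) - cmat A) \<noteq> 0"
    using eigenvalue_le_spec_rad[of "inverse z" A] assms by (auto simp: norm_inverse)
  ultimately show ?thesis
    using \<open>z \<noteq> 0\<close> by (simp add: invertible_det_nz det_mul det_mat)
qed

lemma spec_rad_lt_1_fixed_point:
  fixes A :: "real^'n^'n"
  assumes "spec_rad A < 1" and "A *v x = x"
  shows "x = 0"
proof -
  define xc where "xc = (\<chi> j. complex_of_real (x $ j))"
  have "invertible (mat 1 - cmat A)"
    using spec_rad_lt_1_imp_invertible[OF assms(1), of 1] by simp
  note inv = matrix_inv(2)[OF this]
  have inj: "y = 0" if "(mat 1 - cmat A) *v y = 0" for y
  proof -
    have "y = (matrix_inv (mat 1 - cmat A) ** (mat 1 - cmat A)) *v y" using inv by simp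
    also have "\<dots> = 0" using that by (simp add: matrix_vector_mul_assoc[symmetric])
    finally show ?thesis .
  qed
  have "cmat A *v xc = (\<chi> i. complex_of_real ((A *v x) $ i))"
    unfolding xc_def by (simp add: vec_eq_iff matrix_vector_mult_def)
  then have "cmat A *v xc = xc" using assms(2) unfolding xc_def by simp
  then have "(mat 1 - cmat A) *v xc = 0" by (simp add: matrix_vector_mult_diff_rdistrib)
  then have "xc = 0" by (rule inj)
  then show ?thesis unfolding xc_def by (simp add: vec_eq_iff)
qed

section \<open>Lossless realizations\<close>

text \<open>Complex matrices only form a real vector space, so complex scalars act through \<open>mscale\<close>.\<close>

definition mscale :: "'a::comm_ring_1 \<Rightarrow> 'a^'n^'m \<Rightarrow> 'a^'n^'m" where
  "mscale k M = (\<chi> i j. k * M $ i $ j)"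

lemma mscale_nth [simp]: "mscale k M $ i $ j = k * M $ i $ j"
  by (simp add: mscale_def)

lemma mat_mult_eq_mscale: "mat k ** M = mscale k M" "M ** mat k = mscale k M"
  by (simp_all add: mscale_def mat_mult_left mat_mult_right)

lemma mscale_mult_left: "mscale k A ** B = mscale k (A ** B)"
  by (simp add: vec_eq_iff matrix_matrix_mult_def sum_distrib_left mult.assoc)

lemma mscale_mult_right: "A ** mscale k B = mscale k (A ** B)"
  by (simp add: vec_eq_iff matrix_matrix_mult_def sum_distrib_left mult_ac)

lemma mscale_uminus: "mscale k (- A) = - mscale k (A :: 'a::comm_ring_1^'n^'m)"
  by (simp add: vec_eq_iff)

lemma mscale_mscale: "mscale k (mscale l A) = mscale (k * l) A"
  by (simp add: vec_eq_iff algebra_simps)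

lemma ctranspose_nth [simp]: "ctranspose A $ i $ j = cnj (A $ j $ i)"
  by (simp add: ctranspose_def)

lemma ctranspose_ctranspose [simp]: "ctranspose (ctranspose A) = A"
  by (simp add: vec_eq_iff)

lemma ctranspose_uminus: "ctranspose (- A) = - ctranspose A"
  by (simp add: vec_eq_iff)

lemma ctranspose_mult: "ctranspose (A ** B) = ctranspose B ** ctranspose A"
  by (simp add: vec_eq_iff matrix_matrix_mult_def mult.commute)

lemma ctranspose_add: "ctranspose (A + B) = ctranspose A + ctranspose B"
  by (simp add: vec_eq_iff)

lemma ctranspose_diff: "ctranspose (A - B) = ctranspose A - ctranspose B"
  by (simp add: vec_eq_iff)

lemma ctranspose_mscale: "ctranspose (mscale k A) = mscale (cnj k) (ctranspose A)"
  by (simp add: vec_eq_iff)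

lemma cmat_mult: "cmat (A ** B) = cmat A ** cmat B"
  by (simp add: vec_eq_iff matrix_matrix_mult_def)

lemma cmat_add: "cmat (A + B) = cmat A + cmat B"
  by (simp add: vec_eq_iff)

lemma cmat_mat: "cmat (mat k) = mat (complex_of_real k)"
  by (simp add: vec_eq_iff mat_def)

lemma cmat_0: "cmat 0 = 0"
  by (simp add: vec_eq_iff)

lemma ctranspose_cmat: "ctranspose (cmat A) = cmat (transpose A)"
  by (simp add: vec_eq_iff transpose_def)

lemma lossless_realization_unitary_on_circle:
  fixes a Q G :: "complex^'n^'n" and b :: "complex^'m^'n" and c :: "complex^'n^'o"
    and d :: "complex^'m^'o"
  assumes F1: "ctranspose a ** Q ** a + ctranspose c ** c = Q"
    and F2: "ctranspose b ** Q ** b + ctranspose d ** d = mat 1"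
    and F3: "ctranspose a ** Q ** b + ctranspose c ** d = 0"
    and Q: "ctranspose Q = Q" and z: "cnj z * z = 1"
    and G: "(mat 1 - mscale z a) ** G = mat 1"
  shows "ctranspose (d + mscale z (c ** G ** b)) ** (d + mscale z (c ** G ** b)) = mat 1"
proof -
  \<comment> \<open>After eliminating \<open>c\<close> and \<open>d\<close>, substituting \<open>b = Y - z X\<close> cancels every
    term since \<open>|z| = 1\<close>\<close>
  define Y where "Y = G ** b"
  define X where "X = a ** Y"
  have b: "b = Y - mscale z X"
    using arg_cong[OF G, of "\<lambda>M. M ** b"]
    by (simp add: Y_def X_def matrix_diff_rdistrib mscale_mult_left matrix_mul_assoc)
  have cd: "ctranspose c ** d = - (ctranspose a ** Q ** b)"
    using F3 by (simp add: eq_neg_iff_add_eq_0 add.commute)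
  have dc: "ctranspose d ** c = - (ctranspose b ** Q ** a)"
    using arg_cong[OF cd, of ctranspose] Q
    by (simp add: ctranspose_mult ctranspose_uminus matrix_mul_assoc)
  have cc: "ctranspose c ** c = Q - ctranspose a ** Q ** a"
    using F1 by (simp add: algebra_simps)
  have dd: "ctranspose d ** d = mat 1 - ctranspose b ** Q ** b"
    using F2 by (simp add: algebra_simps)
  have "ctranspose (d + mscale z (c ** G ** b)) ** (d + mscale z (c ** G ** b))
      = ctranspose d ** d + mscale z (ctranspose d ** c ** Y)
        + mscale (cnj z) (ctranspose Y ** (ctranspose c ** d))
        + ctranspose Y ** (ctranspose c ** c) ** Y"
    using z unfolding Y_def
    by (simp add: ctranspose_add ctranspose_mscale ctranspose_mult matrix_add_ldistrib
        matrix_add_rdistrib mscale_mult_left mscale_mult_right mscale_mscale matrix_mul_assoc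
        vec_eq_iff algebra_simps)
  also have "\<dots> = mat 1 - ctranspose b ** Q ** b - mscale z (ctranspose b ** Q ** X)
        - mscale (cnj z) (ctranspose X ** Q ** b) + ctranspose Y ** Q ** Y - ctranspose X ** Q ** X"
    unfolding dd dc cd cc X_def
    by (simp add: ctranspose_mult matrix_uminus_left matrix_uminus_right matrix_diff_ldistrib
        matrix_diff_rdistrib matrix_mul_assoc mscale_uminus algebra_simps)
  also have "\<dots> = mat 1"
    unfolding b using z
    by (simp add: ctranspose_diff ctranspose_mscale matrix_diff_ldistrib matrix_diff_rdistrib
        mscale_mult_left mscale_mult_right mscale_mscale vec_eq_iff algebra_simps)
  finally show ?thesis .
qed

lemma tf_mscale:
  "tf \<alpha> \<beta> \<gamma> \<delta> \<omega> = cmat \<delta> + mscale (exp (\<i> * of_real \<omega>))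
     (cmat \<gamma> ** matrix_inv (mat 1 - mscale (exp (\<i> * of_real \<omega>)) (cmat \<alpha>)) ** cmat \<beta>)"
  unfolding tf_def mat_mult_eq_mscale mscale_mult_left ..

lemma lossless_realization_inner:
  fixes \<alpha> Q :: "real^'n^'n" and \<beta> :: "real^'m^'n" and \<gamma> :: "real^'n^'o" and \<delta> :: "real^'m^'o"
  assumes F1: "transpose \<alpha> ** Q ** \<alpha> + transpose \<gamma> ** \<gamma> = Q"
    and F2: "transpose \<beta> ** Q ** \<beta> + transpose \<delta> ** \<delta> = mat 1"
    and F3: "transpose \<alpha> ** Q ** \<beta> + transpose \<gamma> ** \<delta> = 0"
    and Q: "transpose Q = Q" and stable: "spec_rad \<alpha> < 1"
  shows "inner_sys \<alpha> \<beta> \<gamma> \<delta>"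
  unfolding inner_sys_def
proof
  fix \<omega> :: real
  define z where "z = exp (\<i> * of_real \<omega>)"
  have "cmod z = 1" unfolding z_def by (simp add: norm_exp_i_times)
  then have "cnj z * z = 1" by (metis complex_norm_square mult.commute of_real_1 power_one)
  moreover have "(mat 1 - mscale z (cmat \<alpha>)) ** matrix_inv (mat 1 - mscale z (cmat \<alpha>)) = mat 1"
    using spec_rad_lt_1_imp_invertible[OF stable \<open>cmod z = 1\<close>]
    by (simp add: mat_mult_eq_mscale matrix_inv)
  ultimately show "ctranspose (tf \<alpha> \<beta> \<gamma> \<delta> \<omega>) ** tf \<alpha> \<beta> \<gamma> \<delta> \<omega> = mat 1"
    unfolding tf_mscale z_def[symmetric]
    using lossless_realization_unitary_on_circle[of "cmat \<alpha>" "cmat Q" "cmat \<gamma>" "cmat \<beta>" "cmat \<delta>"]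
      arg_cong[OF F1, of cmat] arg_cong[OF F2, of cmat] arg_cong[OF F3, of cmat] Q
    by (simp add: ctranspose_cmat cmat_mult cmat_add cmat_mat cmat_0)
qed

lemma lossless_realization_energy:
  fixes \<alpha> Q :: "real^'n^'n" and \<beta> :: "real^'m^'n" and \<gamma> :: "real^'n^'o" and \<delta> :: "real^'m^'o"
  assumes F1: "transpose \<alpha> ** Q ** \<alpha> + transpose \<gamma> ** \<gamma> = Q"
    and F2: "transpose \<beta> ** Q ** \<beta> + transpose \<delta> ** \<delta> = mat 1"
    and F3: "transpose \<alpha> ** Q ** \<beta> + transpose \<gamma> ** \<delta> = 0"
    and Q: "transpose Q = Q"
  shows "(\<alpha> *v s + \<beta> *v u) \<bullet> (Q *v (\<alpha> *v s + \<beta> *v u)) + (norm (\<gamma> *v s + \<delta> *v u))\<^sup>2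
    = s \<bullet> (Q *v s) + (norm u)\<^sup>2"
proof -
  have "(norm (\<gamma> *v s + \<delta> *v u))\<^sup>2 = s \<bullet> ((transpose \<gamma> ** \<gamma>) *v s)
      + 2 * (s \<bullet> ((transpose \<gamma> ** \<delta>) *v u)) + u \<bullet> ((transpose \<delta> ** \<delta>) *v u)"
    using quadratic_form_mult_add[of "mat 1" \<gamma> s \<delta> u] by (simp add: power2_norm_eq_inner)
  then have "(\<alpha> *v s + \<beta> *v u) \<bullet> (Q *v (\<alpha> *v s + \<beta> *v u)) + (norm (\<gamma> *v s + \<delta> *v u))\<^sup>2
    = s \<bullet> ((transpose \<alpha> ** Q ** \<alpha> + transpose \<gamma> ** \<gamma>) *v s)
      + 2 * (s \<bullet> ((transpose \<alpha> ** Q ** \<beta> + transpose \<gamma> ** \<delta>) *v u))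
      + u \<bullet> ((transpose \<beta> ** Q ** \<beta> + transpose \<delta> ** \<delta>) *v u)"
    using quadratic_form_mult_add[OF Q, of \<alpha> s \<beta> u]
    by (simp add: matrix_vector_mult_add_rdistrib inner_add_right)
  then show ?thesis unfolding F1 F2 F3 by (simp add: power2_norm_eq_inner)
qed

definition stack :: "'a^'n^'r \<Rightarrow> 'a^'n^'m \<Rightarrow> 'a^'n^('r + 'm)" where
  "stack X Y = (\<chi> i. case i of Inl j \<Rightarrow> X $ j | Inr j \<Rightarrow> Y $ j)"

lemma sum_UNIV_Plus:
  "(\<Sum>k\<in>(UNIV::('r::finite + 'm::finite) set). f k) = (\<Sum>k\<in>UNIV. f (Inl k)) + (\<Sum>k\<in>UNIV. f (Inr k))"
  by (subst UNIV_Plus_UNIV[symmetric], subst sum.Plus) auto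

lemma transpose_stack_mult:
  fixes X :: "'a::comm_ring_1^'n^'r" and Y :: "'a^'n^'m" and U :: "'a^'k^'r" and V :: "'a^'k^'m"
  shows "transpose (stack X Y) ** stack U V = transpose X ** U + transpose Y ** V"
  by (simp add: vec_eq_iff matrix_matrix_mult_def transpose_def stack_def sum_UNIV_Plus)

lemma norm_stack_mult:
  fixes X :: "real^'n^'r" and Y :: "real^'n^'m" and U :: "real^'k^'r" and V :: "real^'k^'m"
  shows "(norm (stack X Y *v s + stack U V *v u))\<^sup>2
    = (norm (X *v s + U *v u))\<^sup>2 + (norm (Y *v s + V *v u))\<^sup>2"
  by (simp add: power2_norm_eq_inner inner_vec_def sum_UNIV_Plus matrix_vector_mult_def stack_def)

lemma DARE_lossless_realization:
  fixes \<alpha> Q :: "real^'n^'n" and \<beta> :: "real^'m^'n" and \<Phi> :: "real^'n^'r" and \<Psi> :: "real^'m^'r"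
    and L :: "real^'n^'m" and N :: "real^'m^'m" and q :: real
  defines "\<gamma> \<equiv> stack (sqrt q *\<^sub>R \<Phi>) (- (msqrt_inv (matrix_inv N) ** L))"
    and "\<delta> \<equiv> stack (sqrt q *\<^sub>R \<Psi>) (msqrt_inv (matrix_inv N))"
  assumes N: "N = mat 1 - transpose \<beta> ** Q ** \<beta> - q *\<^sub>R (transpose \<Psi> ** \<Psi>)"
    and invN: "invertible N" and pd: "pd (matrix_inv N)" and Q: "transpose Q = Q" and q: "0 \<le> q"
    and DARE: "Q = transpose \<alpha> ** Q ** \<alpha> + q *\<^sub>R (transpose \<Phi> ** \<Phi>) + transpose L ** N ** L"
    and L: "L = matrix_inv N ** (transpose \<beta> ** Q ** \<alpha> + q *\<^sub>R (transpose \<Psi> ** \<Phi>))"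
  shows "transpose \<alpha> ** Q ** \<alpha> + transpose \<gamma> ** \<gamma> = Q"
    and "transpose \<beta> ** Q ** \<beta> + transpose \<delta> ** \<delta> = mat 1"
    and "transpose \<alpha> ** Q ** \<beta> + transpose \<gamma> ** \<delta> = 0"
proof -
  define R where "R = msqrt_inv (matrix_inv N)"
  have gram: "transpose R ** R = N"
    unfolding R_def by (rule msqrt_inv_gram[OF pd matrix_inv(2)[OF invN]])
  have qq: "sqrt q * sqrt q = q" "\<bar>q\<bar> = q" using q by simp_all
  have "transpose \<gamma> ** \<gamma> = q *\<^sub>R (transpose \<Phi> ** \<Phi>) + transpose L ** (transpose R ** R) ** L"
    unfolding \<gamma>_def R_def[symmetric] transpose_stack_mult
    by (simp add: transpose_scalar transpose_uminus matrix_uminus_left matrix_uminus_right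
        matrix_transpose_mul matrix_scalar_ac scalar_matrix_assoc[symmetric] qq matrix_mul_assoc)
  then show "transpose \<alpha> ** Q ** \<alpha> + transpose \<gamma> ** \<gamma> = Q"
    using DARE gram by (simp add: add.assoc)
  have "transpose \<delta> ** \<delta> = q *\<^sub>R (transpose \<Psi> ** \<Psi>) + N"
    unfolding \<delta>_def R_def[symmetric] transpose_stack_mult gram
    by (simp add: transpose_scalar matrix_scalar_ac scalar_matrix_assoc[symmetric] qq)
  then show "transpose \<beta> ** Q ** \<beta> + transpose \<delta> ** \<delta> = mat 1"
    unfolding N by simp
  have "transpose L ** N = transpose \<alpha> ** Q ** \<beta> + q *\<^sub>R (transpose \<Phi> ** \<Psi>)"
    using matrix_inv(2)[OF invN] pd Q unfolding L
    by (simp add: matrix_transpose_mul transpose_add transpose_scalar pd_def sym_mat_def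
        matrix_mul_assoc[symmetric])
  moreover have "transpose \<gamma> ** \<delta> = q *\<^sub>R (transpose \<Phi> ** \<Psi>) - transpose L ** (transpose R ** R)"
    unfolding \<gamma>_def \<delta>_def R_def[symmetric] transpose_stack_mult
    by (simp add: transpose_scalar transpose_uminus matrix_uminus_left matrix_transpose_mul
        matrix_scalar_ac scalar_matrix_assoc[symmetric] qq matrix_mul_assoc)
  ultimately show "transpose \<alpha> ** Q ** \<beta> + transpose \<gamma> ** \<delta> = 0"
    unfolding gram by simp
qed

lemma admissible_DARE1_lossless_realization:
  fixes A :: "real^'n^'n" and B :: "real^'m^'n" and C :: "real^'n^'p" and D :: "real^'m^'p"
    and \<Phi> :: "real^'n^'r" and \<Psi> :: "real^'m^'r"
    and K :: "real^'p^'n" and M :: "real^'p^'r" and q :: real and Q :: "real^'n^'n"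
  defines "S \<equiv> S_of B D \<Psi> K M q Q" and "L \<equiv> L_of A B C D \<Phi> \<Psi> K M q Q"
  defines "\<gamma> \<equiv> (\<chi> i. case i of Inl j \<Rightarrow> sqrt q *\<^sub>R ((\<Phi> - M ** C) $ j)
                          | Inr j \<Rightarrow> - ((msqrt_inv S ** L) $ j)) :: real^'n^('r + 'm)"
    and "\<delta> \<equiv> (\<chi> i. case i of Inl j \<Rightarrow> sqrt q *\<^sub>R ((\<Psi> - M ** D) $ j)
                          | Inr j \<Rightarrow> msqrt_inv S $ j) :: real^'m^('r + 'm)"
  assumes adm: "admissible_DARE1 A B C D \<Phi> \<Psi> K M q Q" and q: "0 \<le> q"
  shows "transpose (A - K ** C) ** Q ** (A - K ** C) + transpose \<gamma> ** \<gamma> = Q"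
    and "transpose (B - K ** D) ** Q ** (B - K ** D) + transpose \<delta> ** \<delta> = mat 1"
    and "transpose (A - K ** C) ** Q ** (B - K ** D) + transpose \<gamma> ** \<delta> = 0"
    and "transpose Q = Q" and "pd S" and "spec_rad (A - K ** C + (B - K ** D) ** L) < 1"
    and "(norm (\<gamma> *v x + \<delta> *v u))\<^sup>2
      = q * (norm ((\<Phi> - M ** C) *v x + (\<Psi> - M ** D) *v u))\<^sup>2 + (norm (msqrt_inv S *v (u - L *v
          x)))\<^sup>2"
proof -
  have \<gamma>: "\<gamma> = stack (sqrt q *\<^sub>R (\<Phi> - M ** C)) (- (msqrt_inv S ** L))"
    and \<delta>: "\<delta> = stack (sqrt q *\<^sub>R (\<Psi> - M ** D)) (msqrt_inv S)"
    unfolding \<gamma>_def \<delta>_def stack_def by (simp_all add: vec_eq_iff split: sum.split)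
  define N where "N = Sinv_of B D \<Psi> K M q Q"
  have S: "S = matrix_inv N" and L:
      "L = matrix_inv N ** (transpose (B - K ** D) ** Q ** (A - K ** C)
      + q *\<^sub>R (transpose (\<Psi> - M ** D) ** (\<Phi> - M ** C)))"
    unfolding S_def L_def N_def S_of_def L_of_def by simp_all
  have invN: "invertible N" and psd: "psd Q" and pd: "pd S"
    and DARE: "Q = transpose (A - K ** C) ** Q ** (A - K ** C)
      + q *\<^sub>R (transpose (\<Phi> - M ** C) ** (\<Phi> - M ** C)) + transpose L ** N ** L"
    and "L \<in> Lset A B C D K"
    using adm unfolding admissible_DARE1_def Let_def S_def L_def N_def by simp_all
  then show "spec_rad (A - K ** C + (B - K ** D) ** L) < 1" by (simp add: Lset_def)
  show "transpose Q = Q" "pd S" using psd pd by (simp_all add: psd_symmetric)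
  note kyp = DARE_lossless_realization[OF N_def[unfolded Sinv_of_def] invN pd[unfolded S]
      psd_symmetric[OF psd] q DARE L]
  show "transpose (A - K ** C) ** Q ** (A - K ** C) + transpose \<gamma> ** \<gamma> = Q"
    and "transpose (B - K ** D) ** Q ** (B - K ** D) + transpose \<delta> ** \<delta> = mat 1"
    and "transpose (A - K ** C) ** Q ** (B - K ** D) + transpose \<gamma> ** \<delta> = 0"
    using kyp unfolding \<gamma> \<delta> S by simp_all
  show "(norm (\<gamma> *v x + \<delta> *v u))\<^sup>2
      = q * (norm ((\<Phi> - M ** C) *v x + (\<Psi> - M ** D) *v u))\<^sup>2 + (norm (msqrt_inv S *v (u - L *v
          x)))\<^sup>2"
    unfolding \<gamma> \<delta> norm_stack_mult using q
    by (simp add: scaleR_matrix_vector_mult matrix_vector_mult_uminus_left matrix_vector_mul_assoc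
        matrix_vector_mult_diff_distrib power_mult_distrib flip: scaleR_right_distrib)
qed

lemma observer_error_identity:
  fixes A :: "real^'n^'o" and B :: "real^'m^'o" and C :: "real^'n^'p" and D :: "real^'m^'p"
    and K :: "real^'p^'o"
  shows "A *v x + B *v w - ((A - K ** C) *v xh + K *v (C *v x + D *v w))
    = (A - K ** C) *v (x - xh) + (B - K ** D) *v w"
  by (simp add: matrix_vector_mult_diff_rdistrib matrix_vector_right_distrib
      matrix_vector_mult_diff_distrib matrix_vector_mul_assoc algebra_simps)

section \<open>Second moments of random vectors\<close>

context prob_space
begin

definition square_integrable :: "('a \<Rightarrow> 'b::real_normed_vector) \<Rightarrow> bool" where
  "square_integrable X \<longleftrightarrow> X \<in> borel_measurable M \<and> integrable M (\<lambda>\<omega>. (norm (X \<omega>))\<^sup>2)"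

lemma square_integrable_bounded_linear:
  fixes X :: "'a \<Rightarrow> 'b::real_normed_vector"
  assumes f: "bounded_linear f" and X: "square_integrable X"
  shows "square_integrable (\<lambda>\<omega>. f (X \<omega>))"
proof -
  obtain K where K: "\<And>x. norm (f x) \<le> norm x * K" "K \<ge> 0"
    using bounded_linear.nonneg_bounded[OF f] by blast
  have [measurable]: "X \<in> borel_measurable M" using X by (simp add: square_integrable_def)
  have "f \<in> borel_measurable borel"
    by (intro borel_measurable_continuous_onI linear_continuous_on f)
  then have fX [measurable]: "(\<lambda>\<omega>. f (X \<omega>)) \<in> borel_measurable M" by measurable
  have "integrable M (\<lambda>\<omega>. K\<^sup>2 * (norm (X \<omega>))\<^sup>2)"
    using X by (simp add: square_integrable_def)
  moreover have "(\<lambda>\<omega>. (norm (f (X \<omega>)))\<^sup>2) \<in> borel_measurable M" by measurable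
  moreover have "norm ((norm (f x))\<^sup>2) \<le> norm (K\<^sup>2 * (norm x)\<^sup>2)" for x
    using power_mono[OF K(1)[of x] norm_ge_zero, of 2]
    by (simp add: power_mult_distrib mult.commute)
  then have "AE \<omega> in M. norm ((norm (f (X \<omega>)))\<^sup>2) \<le> norm (K\<^sup>2 * (norm (X \<omega>))\<^sup>2)"
    by simp
  ultimately have "integrable M (\<lambda>\<omega>. (norm (f (X \<omega>)))\<^sup>2)"
    by (rule Bochner_Integration.integrable_bound)
  with fX show ?thesis by (simp add: square_integrable_def)
qed

lemma square_integrable_add:
  fixes X Y :: "'a \<Rightarrow> 'b::{real_normed_vector, second_countable_topology}"
  assumes "square_integrable X" and "square_integrable Y"
  shows "square_integrable (\<lambda>\<omega>. X \<omega> + Y \<omega>)"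
proof -
  have [measurable]: "X \<in> borel_measurable M" "Y \<in> borel_measurable M"
    using assms by (simp_all add: square_integrable_def)
  have "integrable M (\<lambda>\<omega>. 2 * (norm (X \<omega>))\<^sup>2 + 2 * (norm (Y \<omega>))\<^sup>2)"
    using assms by (simp add: square_integrable_def)
  moreover have "(\<lambda>\<omega>. (norm (X \<omega> + Y \<omega>))\<^sup>2) \<in> borel_measurable M" by measurable
  moreover have "(norm (x + y))\<^sup>2 \<le> 2 * (norm x)\<^sup>2 + 2 * (norm y)\<^sup>2" for x y :: 'b
  proof -
    have "(norm (x + y))\<^sup>2 \<le> (norm x + norm y)\<^sup>2"
      by (rule power_mono[OF norm_triangle_ineq norm_ge_zero])
    also have "\<dots> \<le> 2 * (norm x)\<^sup>2 + 2 * (norm y)\<^sup>2"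
      using sum_squares_bound[of "norm x" "norm y"] by (simp add: power2_eq_square algebra_simps)
    finally show ?thesis .
  qed
  then have "AE \<omega> in M. norm ((norm (X \<omega> + Y \<omega>))\<^sup>2)
      \<le> norm (2 * (norm (X \<omega>))\<^sup>2 + 2 * (norm (Y \<omega>))\<^sup>2)"
    by simp
  ultimately have "integrable M (\<lambda>\<omega>. (norm (X \<omega> + Y \<omega>))\<^sup>2)"
    by (rule Bochner_Integration.integrable_bound)
  then show ?thesis by (simp add: square_integrable_def)
qed

lemma square_integrable_sum:
  fixes X :: "'i \<Rightarrow> 'a \<Rightarrow> 'b::{real_normed_vector, second_countable_topology}"
  shows "finite I \<Longrightarrow> (\<And>i. i \<in> I \<Longrightarrow> square_integrable (X i))
    \<Longrightarrow> square_integrable (\<lambda>\<omega>. \<Sum>i\<in>I. X i \<omega>)"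
proof (induction I rule: finite_induct)
  case empty
  then show ?case by (simp add: square_integrable_def)
next
  case (insert i I)
  then show ?case by (simp add: square_integrable_add)
qed

lemma square_integrable_matrix_combination:
  fixes X :: "'a \<Rightarrow> real^'n" and Y :: "'a \<Rightarrow> real^'m" and A :: "real^'n^'k" and B :: "real^'m^'k"
  assumes "square_integrable X" and "square_integrable Y"
  shows "square_integrable (\<lambda>\<omega>. A *v X \<omega> + B *v Y \<omega>)"
  using assms
  by (intro square_integrable_add
      square_integrable_bounded_linear[OF matrix_vector_mul_bounded_linear])

lemma square_integrable_component:
  "square_integrable X \<Longrightarrow> square_integrable (\<lambda>\<omega>. X \<omega> $ i)"
  using square_integrable_bounded_linear[OF bounded_linear_vec_nth] .

lemma square_integrable_vec:
  fixes X :: "'a \<Rightarrow> real^'n"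
  assumes "\<And>i. square_integrable (\<lambda>\<omega>. X \<omega> $ i)"
  shows "square_integrable X"
proof -
  have "square_integrable (\<lambda>\<omega>. X \<omega> $ i *\<^sub>R (axis i 1 :: real^'n))" for i
    using square_integrable_bounded_linear[OF bounded_linear_scaleR_left assms] .
  then have "square_integrable (\<lambda>\<omega>. \<Sum>i\<in>UNIV. X \<omega> $ i *\<^sub>R (axis i 1 :: real^'n))"
    by (auto intro!: square_integrable_sum)
  moreover have "(\<Sum>i\<in>UNIV. x $ i *\<^sub>R axis i 1) = x" for x :: "real^'n"
    using basis_expansion[of x] by (simp add: scalar_mult_eq_scaleR)
  ultimately show ?thesis by simp
qed

lemma square_integrable_integrable:
  fixes X :: "'a \<Rightarrow> 'b::{banach, second_countable_topology}"
  assumes "square_integrable X"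
  shows "integrable M X"
proof -
  have [measurable]: "X \<in> borel_measurable M" using assms by (simp add: square_integrable_def)
  have "integrable M (\<lambda>\<omega>. 1 + (norm (X \<omega>))\<^sup>2)"
    using assms by (simp add: square_integrable_def)
  moreover have "X \<in> borel_measurable M" by measurable
  moreover have "norm x \<le> 1 + (norm x)\<^sup>2" for x :: 'b
    using sum_squares_bound[of 1 "norm x", simplified] norm_ge_zero[of x] by linarith
  then have "AE \<omega> in M. norm (X \<omega>) \<le> norm (1 + (norm (X \<omega>))\<^sup>2)"
    by simp
  ultimately show ?thesis by (rule Bochner_Integration.integrable_bound)
qed

lemma square_integrable_inner:
  fixes X Y :: "'a \<Rightarrow> 'b::{real_inner, second_countable_topology}"
  assumes "square_integrable X" and "square_integrable Y"
  shows "integrable M (\<lambda>\<omega>. X \<omega> \<bullet> Y \<omega>)"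
proof -
  have [measurable]: "X \<in> borel_measurable M" "Y \<in> borel_measurable M"
    using assms by (simp_all add: square_integrable_def)
  have "integrable M (\<lambda>\<omega>. (norm (X \<omega>))\<^sup>2 + (norm (Y \<omega>))\<^sup>2)"
    using assms by (simp add: square_integrable_def)
  moreover have "(\<lambda>\<omega>. X \<omega> \<bullet> Y \<omega>) \<in> borel_measurable M" by measurable
  moreover have "\<bar>x \<bullet> y\<bar> \<le> (norm x)\<^sup>2 + (norm y)\<^sup>2" for x y :: 'b
    using Cauchy_Schwarz_ineq2[of x y] sum_squares_bound[of "norm x" "norm y"]
    by (simp add: power2_eq_square)
  then have "AE \<omega> in M. norm (X \<omega> \<bullet> Y \<omega>) \<le> norm ((norm (X \<omega>))\<^sup>2 + (norm (Y \<omega>))\<^sup>2)"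
    by simp
  ultimately show ?thesis by (rule Bochner_Integration.integrable_bound)
qed

lemma square_integrable_mult:
  fixes X Y :: "'a \<Rightarrow> real"
  shows "square_integrable X \<Longrightarrow> square_integrable Y \<Longrightarrow> integrable M (\<lambda>\<omega>. X \<omega> * Y \<omega>)"
  using square_integrable_inner[of X Y] by simp

definition second_moment_mat :: "('a \<Rightarrow> real^'n) \<Rightarrow> real^'n^'n" where
  "second_moment_mat X = (\<chi> i j. expectation (\<lambda>\<omega>. X \<omega> $ i * X \<omega> $ j))"

lemma expectation_bilinear_form:
  fixes X :: "'a \<Rightarrow> real^'n" and Y :: "'a \<Rightarrow> real^'m" and A :: "real^'m^'n"
  assumes X: "square_integrable X" and Y: "square_integrable Y"
  shows "integrable M (\<lambda>\<omega>. X \<omega> \<bullet> (A *v Y \<omega>))"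
    and "expectation (\<lambda>\<omega>. X \<omega> \<bullet> (A *v Y \<omega>))
      = (\<Sum>i\<in>UNIV. \<Sum>j\<in>UNIV. A $ i $ j * expectation (\<lambda>\<omega>. X \<omega> $ i * Y \<omega> $ j))"
proof -
  have int: "integrable M (\<lambda>\<omega>. X \<omega> $ i * Y \<omega> $ j)" for i j
    using square_integrable_mult[OF square_integrable_component[OF X]
        square_integrable_component[OF Y]] .
  have eq: "X \<omega> \<bullet> (A *v Y \<omega>) = (\<Sum>i\<in>UNIV. \<Sum>j\<in>UNIV. A $ i $ j * (X \<omega> $ i * Y \<omega> $ j))" for \<omega>
    by (simp add: inner_vec_def matrix_vector_mult_def sum_distrib_left mult_ac)
  show "integrable M (\<lambda>\<omega>. X \<omega> \<bullet> (A *v Y \<omega>))" unfolding eq using int by auto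
  show "expectation (\<lambda>\<omega>. X \<omega> \<bullet> (A *v Y \<omega>))
      = (\<Sum>i\<in>UNIV. \<Sum>j\<in>UNIV. A $ i $ j * expectation (\<lambda>\<omega>. X \<omega> $ i * Y \<omega> $ j))"
    unfolding eq using int by (simp add: Bochner_Integration.integral_sum)
qed

lemma expectation_quadratic_form:
  assumes "square_integrable X"
  shows "expectation (\<lambda>\<omega>. X \<omega> \<bullet> (A *v X \<omega>)) = trace (A ** second_moment_mat X)"
  unfolding expectation_bilinear_form(2)[OF assms assms]
  by (simp add: trace_def matrix_matrix_mult_def second_moment_mat_def mult.commute)

lemma cov_mat_centered:
  assumes "square_integrable X" and "expectation X = 0"
  shows "cov_mat M X = second_moment_mat X"
proof -
  have "expectation (\<lambda>\<omega>. X \<omega> $ i) = 0" for i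
    using integral_bounded_linear[OF bounded_linear_vec_nth
        square_integrable_integrable[OF assms(1)]]
      assms(2) by simp
  then show ?thesis by (simp add: cov_mat_def second_moment_mat_def)
qed

lemma expectation_matrix_vector_mult:
  fixes X :: "'a \<Rightarrow> real^'n" and A :: "real^'n^'m"
  assumes "square_integrable X"
  shows "expectation (\<lambda>\<omega>. A *v X \<omega>) = A *v expectation X"
  using integral_bounded_linear[OF matrix_vector_mul_bounded_linear
      square_integrable_integrable[OF assms]] .

lemma std_normal_moments:
  assumes "distributed M lborel X std_normal_density"
  shows "square_integrable X" "expectation X = 0" "expectation (\<lambda>\<omega>. X \<omega> * X \<omega>) = 1"
proof -
  have "X \<in> borel_measurable M"
    using distributed_measurable[OF assms] by (simp add: measurable_lborel1)
  moreover have "integrable M (\<lambda>\<omega>. (X \<omega>)\<^sup>2)"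
    using distributed_integrable[OF assms, of "\<lambda>x. x\<^sup>2"] integrable_std_normal_moment[of 2]
    by (simp add: normal_density_nonneg)
  ultimately show "square_integrable X" by (simp add: square_integrable_def)
  show "expectation X = 0" by (rule standard_normal_distributed_expectation[OF assms])
  then show "expectation (\<lambda>\<omega>. X \<omega> * X \<omega>) = 1"
    using standard_normal_distributed_variance[OF assms] by (simp add: power2_eq_square)
qed

lemma indep_vars_expectation_mult:
  fixes Y :: "'i \<Rightarrow> 'a \<Rightarrow> real"
  assumes "indep_vars (\<lambda>_. borel) Y I" and "i \<in> I" "j \<in> I" "i \<noteq> j"
    and "integrable M (Y i)" "integrable M (Y j)"
  shows "expectation (\<lambda>\<omega>. Y i \<omega> * Y j \<omega>) = expectation (Y i) * expectation (Y j)"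
proof -
  have "indep_vars (\<lambda>_. borel) Y (insert i {j})"
    using assms(2,3) by (intro indep_vars_subset[OF assms(1)]) auto
  from indep_vars_sum[OF _ _ this] assms(4)
  have "indep_var borel (Y i) borel (\<lambda>\<omega>. \<Sum>k\<in>{j}. Y k \<omega>)" by simp
  then show ?thesis
    using assms(5,6) by (intro indep_var_lebesgue_integral) auto
qed

lemma standard_white_noise:
  fixes v :: "'k \<Rightarrow> 'a \<Rightarrow> real^'m"
  assumes indep: "indep_vars (\<lambda>_. borel) (\<lambda>(k, i) \<omega>. v k \<omega> $ i) UNIV"
    and normal: "\<And>k i. distributed M lborel (\<lambda>\<omega>. v k \<omega> $ i) std_normal_density"
  shows "square_integrable (v k)" "expectation (v k) = 0" "second_moment_mat (v k) = mat 1"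
    and "expectation (\<lambda>\<omega>. (norm (v k \<omega>))\<^sup>2) = CARD('m)"
proof -
  note moments = std_normal_moments[OF normal]
  show sq: "square_integrable (v k)" by (rule square_integrable_vec[OF moments(1)])
  show "expectation (v k) = 0"
    using integral_bounded_linear[OF bounded_linear_vec_nth square_integrable_integrable[OF sq]]
      moments(2) by (simp add: vec_eq_iff)
  have "expectation (\<lambda>\<omega>. v k \<omega> $ i * v k \<omega> $ j) = 0" if "i \<noteq> j" for i j
    using indep_vars_expectation_mult[OF indep, of "(k, i)" "(k, j)"] that
      square_integrable_integrable[OF moments(1)] moments(2) by simp
  then show white: "second_moment_mat (v k) = mat 1"
    using moments(3) by (simp add: second_moment_mat_def mat_def vec_eq_iff)
  show "expectation (\<lambda>\<omega>. (norm (v k \<omega>))\<^sup>2) = CARD('m)"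
    using expectation_quadratic_form[OF sq, of "mat 1"] white
    by (simp add: power2_norm_eq_inner trace_I)
qed

lemma independent_centered_uncorrelated:
  fixes X :: "'a \<Rightarrow> real^'n" and V :: "'a \<Rightarrow> real^'m" and A :: "real^'m^'n"
  assumes indep: "indep_var borel (\<lambda>\<omega>. (X \<omega>, 0 :: real^'m)) borel (\<lambda>\<omega>. (0 :: real^'n, V \<omega>))"
    and X: "square_integrable X" and V: "square_integrable V" and "expectation V = 0"
  shows "expectation (\<lambda>\<omega>. X \<omega> \<bullet> (A *v V \<omega>)) = 0"
proof -
  have "expectation (\<lambda>\<omega>. X \<omega> $ i * V \<omega> $ j) = 0" for i j
  proof -
    have "(\<lambda>p. fst p $ i) \<in> borel_measurable (borel :: ((real^'n) \<times> (real^'m)) measure)"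
      "(\<lambda>p. snd p $ j) \<in> borel_measurable (borel :: ((real^'n) \<times> (real^'m)) measure)"
      by (intro borel_measurable_continuous_onI continuous_intros)+
    from indep_var_compose[OF indep this]
    have "indep_var borel (\<lambda>\<omega>. X \<omega> $ i) borel (\<lambda>\<omega>. V \<omega> $ j)" by (simp add: o_def)
    then have "expectation (\<lambda>\<omega>. X \<omega> $ i * V \<omega> $ j)
        = expectation (\<lambda>\<omega>. X \<omega> $ i) * expectation (\<lambda>\<omega>. V \<omega> $ j)"
      using X V by (intro indep_var_lebesgue_integral square_integrable_integrable
          square_integrable_component[of X i] square_integrable_component[of V j])
    also have "expectation (\<lambda>\<omega>. V \<omega> $ j) = 0"
      using integral_bounded_linear[OF bounded_linear_vec_nth square_integrable_integrable[OF V]]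
        \<open>expectation V = 0\<close> by simp
    finally show ?thesis by simp
  qed
  then show ?thesis by (simp add: expectation_bilinear_form(2)[OF X V])
qed

lemma stationary_recursion_mean_zero:
  fixes X0 X1 :: "'a \<Rightarrow> real^'n" and V :: "'a \<Rightarrow> real^'m" and F :: "real^'n^'n" and G :: "real^'m^'n"
  assumes rec: "\<And>\<omega>. X1 \<omega> = F *v X0 \<omega> + G *v V \<omega>" and stable: "spec_rad F < 1"
    and X0: "square_integrable X0" and V: "square_integrable V" and "expectation V = 0"
    and stationary: "expectation X1 = expectation X0"
  shows "expectation X0 = 0"
proof (rule spec_rad_lt_1_fixed_point[OF stable])
  have "expectation X1 = expectation (\<lambda>\<omega>. F *v X0 \<omega>) + expectation (\<lambda>\<omega>. G *v V \<omega>)"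
    unfolding rec using X0 V
    by (intro Bochner_Integration.integral_add square_integrable_integrable
        square_integrable_bounded_linear[OF matrix_vector_mul_bounded_linear])
  then show "F *v expectation X0 = expectation X0"
    using stationary \<open>expectation V = 0\<close>
    by (simp add: expectation_matrix_vector_mult[OF X0] expectation_matrix_vector_mult[OF V])
qed

lemma stationary_energy_balance:
  fixes X0 X1 :: "'a \<Rightarrow> real^'n" and Y :: "'a \<Rightarrow> real^'o" and W :: "'a \<Rightarrow> real^'m"
  assumes balance: "\<And>\<omega>. X1 \<omega> \<bullet> (Q *v X1 \<omega>) + (norm (Y \<omega>))\<^sup>2 = X0 \<omega> \<bullet> (Q *v X0 \<omega>) + (norm (W \<omega>))\<^sup>2"
    and X0: "square_integrable X0" and X1: "square_integrable X1"
    and Y: "square_integrable Y" and W: "square_integrable W"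
    and stationary: "second_moment_mat X1 = second_moment_mat X0"
  shows "expectation (\<lambda>\<omega>. (norm (Y \<omega>))\<^sup>2) = expectation (\<lambda>\<omega>. (norm (W \<omega>))\<^sup>2)"
proof -
  have "expectation (\<lambda>\<omega>. X1 \<omega> \<bullet> (Q *v X1 \<omega>)) + expectation (\<lambda>\<omega>. (norm (Y \<omega>))\<^sup>2)
      = expectation (\<lambda>\<omega>. X0 \<omega> \<bullet> (Q *v X0 \<omega>)) + expectation (\<lambda>\<omega>. (norm (W \<omega>))\<^sup>2)"
    using balance expectation_bilinear_form(1)[OF X0 X0] expectation_bilinear_form(1)[OF X1 X1] Y W
    by (simp add: square_integrable_def flip: Bochner_Integration.integral_add)
  then show ?thesis
    by (simp add: expectation_quadratic_form[OF X0] expectation_quadratic_form[OF X1] stationary)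
qed

lemma expectation_norm_feedback:
  fixes X :: "'a \<Rightarrow> real^'n" and V :: "'a \<Rightarrow> real^'m" and L :: "real^'n^'m" and R :: "real^'m^'m"
  assumes X: "square_integrable X" and V: "square_integrable V"
    and white: "second_moment_mat V = mat 1"
    and uncorrelated: "\<And>A :: real^'m^'n. expectation (\<lambda>\<omega>. X \<omega> \<bullet> (A *v V \<omega>)) = 0"
  shows "expectation (\<lambda>\<omega>. (norm (L *v X \<omega> + R *v V \<omega>))\<^sup>2)
    = trace (L ** second_moment_mat X ** transpose L + transpose R ** R)"
proof -
  have "(norm (L *v X \<omega> + R *v V \<omega>))\<^sup>2 = X \<omega> \<bullet> ((transpose L ** L) *v X \<omega>)
      + 2 * (X \<omega> \<bullet> ((transpose L ** R) *v V \<omega>)) + V \<omega> \<bullet> ((transpose R ** R) *v V \<omega>)" for \<omega>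
    using quadratic_form_mult_add[of "mat 1" L "X \<omega>" R "V \<omega>"] by (simp add: power2_norm_eq_inner)
  then have "expectation (\<lambda>\<omega>. (norm (L *v X \<omega> + R *v V \<omega>))\<^sup>2)
      = trace (transpose L ** L ** second_moment_mat X) + trace (transpose R ** R)"
    using expectation_bilinear_form(1)[OF X X] expectation_bilinear_form(1)[OF X V]
      expectation_bilinear_form(1)[OF V V]
    by (simp add: expectation_quadratic_form[OF X] expectation_quadratic_form[OF V] white
        uncorrelated)
  then show ?thesis
    using trace_mul_sym[of "transpose L" "L ** second_moment_mat X"]
    by (simp add: trace_add matrix_mul_assoc)
qed

lemma stationary_lossless_feedback:
  fixes X0 X1 :: "'a \<Rightarrow> real^'n" and V W :: "'a \<Rightarrow> real^'m" and \<alpha> Q :: "real^'n^'n"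
    and \<beta> :: "real^'m^'n" and \<gamma> :: "real^'n^'o" and \<delta> :: "real^'m^'o"
    and L :: "real^'n^'m" and R :: "real^'m^'m"
  assumes F1: "transpose \<alpha> ** Q ** \<alpha> + transpose \<gamma> ** \<gamma> = Q"
    and F2: "transpose \<beta> ** Q ** \<beta> + transpose \<delta> ** \<delta> = mat 1"
    and F3: "transpose \<alpha> ** Q ** \<beta> + transpose \<gamma> ** \<delta> = 0"
    and Q: "transpose Q = Q" and stable: "spec_rad (\<alpha> + \<beta> ** L) < 1"
    and X1: "\<And>\<omega>. X1 \<omega> = \<alpha> *v X0 \<omega> + \<beta> *v W \<omega>" and W: "\<And>\<omega>. W \<omega> = L *v X0 \<omega> + R *v V \<omega>"
    and sqX: "square_integrable X0" "square_integrable X1"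
    and V: "square_integrable V" "expectation V = 0" "second_moment_mat V = mat 1"
    and causal: "indep_var borel (\<lambda>\<omega>. (X0 \<omega>, 0 :: real^'m)) borel (\<lambda>\<omega>. (0 :: real^'n, V \<omega>))"
    and stationary: "expectation X1 = expectation X0" "cov_mat M X1 = cov_mat M X0"
  shows "square_integrable W"
    and "expectation (\<lambda>\<omega>. (norm (\<gamma> *v X0 \<omega> + \<delta> *v W \<omega>))\<^sup>2) = expectation (\<lambda>\<omega>. (norm (W \<omega>))\<^sup>2)"
    and "expectation (\<lambda>\<omega>. (norm (W \<omega>))\<^sup>2)
      = trace (L ** cov_mat M X0 ** transpose L + transpose R ** R)"
proof -
  show sqW: "square_integrable W"
    unfolding W[abs_def] by (rule square_integrable_matrix_combination[OF sqX(1) V(1)])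
  have "X1 \<omega> = (\<alpha> + \<beta> ** L) *v X0 \<omega> + (\<beta> ** R) *v V \<omega>" for \<omega>
    unfolding X1 W by (simp add: matrix_vector_mult_add_rdistrib matrix_vector_right_distrib
        matrix_vector_mul_assoc add.assoc)
  then have mean0: "expectation X0 = 0"
    using stationary_recursion_mean_zero[OF _ stable sqX(1) V(1,2) stationary(1)] by blast
  then have "expectation X1 = 0" using stationary(1) by simp
  then have cov: "cov_mat M X0 = second_moment_mat X0" "second_moment_mat X1 = second_moment_mat X0"
    using cov_mat_centered[OF sqX(1) mean0] cov_mat_centered[OF sqX(2)] stationary(2) by simp_all
  show "expectation (\<lambda>\<omega>. (norm (\<gamma> *v X0 \<omega> + \<delta> *v W \<omega>))\<^sup>2) = expectation (\<lambda>\<omega>. (norm (W \<omega>))\<^sup>2)"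
    using lossless_realization_energy[OF F1 F2 F3 Q] X1
    by (intro stationary_energy_balance[OF _ sqX square_integrable_matrix_combination[OF sqX(1) sqW]
        sqW cov(2)]) simp
  show "expectation (\<lambda>\<omega>. (norm (W \<omega>))\<^sup>2)
      = trace (L ** cov_mat M X0 ** transpose L + transpose R ** R)"
    unfolding W cov(1)
    by (rule expectation_norm_feedback[OF sqX(1) V(1,3)
          independent_centered_uncorrelated[OF causal sqX(1) V(1,2)]])
qed

end

theorem mainTheorem7:
  fixes A :: "real^'n^'n" and B :: "real^'m^'n" and C :: "real^'n^'p" and D :: "real^'m^'p"
    and \<Phi> :: "real^'n^'r" and \<Psi> :: "real^'m^'r"
    and K :: "real^'p^'n" and M :: "real^'p^'r" and q :: real and Q :: "real^'n^'n"
    and Pr :: "'w measure"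
    and v :: "int \<Rightarrow> 'w \<Rightarrow> real^'m"
    and x xh :: "int \<Rightarrow> 'w \<Rightarrow> real^'n"
    and w :: "int \<Rightarrow> 'w \<Rightarrow> real^'m"
  defines "S \<equiv> S_of B D \<Psi> K M q Q"
    and "L \<equiv> L_of A B C D \<Phi> \<Psi> K M q Q"
    and "y \<equiv> (\<lambda>k \<omega>. C *v x k \<omega> + D *v w k \<omega>)"
    and "z \<equiv> (\<lambda>k \<omega>. \<Phi> *v x k \<omega> + \<Psi> *v w k \<omega>)"
    and "zh \<equiv> (\<lambda>k \<omega>. (\<Phi> - M ** C) *v xh k \<omega> + M *v (C *v x k \<omega> + D *v w k \<omega>))"
    and "xt \<equiv> (\<lambda>k \<omega>. x k \<omega> - xh k \<omega>)"
  assumes stabA: "spec_rad A < 1"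
    and rankD: "rank D = CARD('p)"
    and K: "K \<in> Kset A C"
    and q_nonneg: "0 \<le> q"
    and q_lt: "ereal q < theta A B C D \<Phi> \<Psi> K M"
    and Q: "admissible_DARE1 A B C D \<Phi> \<Psi> K M q Q"
    \<comment> \<open>V: Gaussian white noise with identity covariance (i.i.d. standard normal components)\<close>
    and P: "prob_space Pr"
    and v_indep: "prob_space.indep_vars Pr (\<lambda>_. borel) (\<lambda>(k, i) \<omega>. v k \<omega> $ i) UNIV"
    and v_normal: "\<And>k i. distributed Pr lborel (\<lambda>\<omega>. v k \<omega> $ i) std_normal_density"
    \<comment> \<open>plant and estimator E_{K,M}\<close>
    and x_meas: "\<And>k. x k \<in> borel_measurable Pr"
    and xh_meas: "\<And>k. xh k \<in> borel_measurable Pr"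
    and plant: "\<And>k \<omega>. x (k + 1) \<omega> = A *v x k \<omega> + B *v w k \<omega>"
    and estim: "\<And>k \<omega>. xh (k + 1) \<omega> = (A - K ** C) *v xh k \<omega> + K *v y k \<omega>"
    \<comment> \<open>noise generation W = G_{K,S,L} V, with state xt\<close>
    and w_gen: "\<And>k \<omega>. w k \<omega> = L *v xt k \<omega> + msqrt S *v v k \<omega>"
    \<comment> \<open>G_{K,S,L} is in its stationary regime (causal, wide-sense stationary state)\<close>
    and xt_L2: "\<And>k. integrable Pr (\<lambda>\<omega>. (norm (xt k \<omega>))\<^sup>2)"
    and xt_mean: "\<And>k. integral\<^sup>L Pr (xt k) = integral\<^sup>L Pr (xt 0)"
    and xt_cov: "\<And>k. cov_mat Pr (xt k) = cov_mat Pr (xt 0)"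
    and causal: "\<And>k. prob_space.indep_var Pr borel (\<lambda>\<omega>. (xt k \<omega>, 0 :: real^'m))
                                  borel (\<lambda>\<omega>. (0 :: real^'n, v k \<omega>))"
  shows "inner_sys (A - K ** C) (B - K ** D)
           ((\<chi> i. case i of Inl j \<Rightarrow> sqrt q *\<^sub>R ((\<Phi> - M ** C) $ j)
                          | Inr j \<Rightarrow> - ((msqrt_inv S ** L) $ j)) :: real^'n^('r + 'm))
           ((\<chi> i. case i of Inl j \<Rightarrow> sqrt q *\<^sub>R ((\<Psi> - M ** D) $ j)
                          | Inr j \<Rightarrow> msqrt_inv S $ j) :: real^'m^('r + 'm))
    \<and> q * integral\<^sup>L Pr (\<lambda>\<omega>. (norm (z 0 \<omega> - zh 0 \<omega>))\<^sup>2) + real CARD('m)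
        = integral\<^sup>L Pr (\<lambda>\<omega>. (norm (w 0 \<omega>))\<^sup>2)
    \<and> integral\<^sup>L Pr (\<lambda>\<omega>. (norm (w 0 \<omega>))\<^sup>2)
        = trace (L ** cov_mat Pr (xt 0) ** transpose L + S)"
proof -
  \<comment> \<open>\<open>stabA\<close>, \<open>rankD\<close> and \<open>q_lt\<close> only guarantee that an admissible \<open>Q\<close> exists; it is given\<close>
  interpret prob_space Pr by (rule P)
  note real = admissible_DARE1_lossless_realization[OF Q q_nonneg, folded S_def L_def]
  have xt_step: "xt (k + 1) \<omega> = (A - K ** C) *v xt k \<omega> + (B - K ** D) *v w k \<omega>" for k \<omega>
    unfolding xt_def plant estim y_def by (rule observer_error_identity)
  have zt: "z 0 \<omega> - zh 0 \<omega> = (\<Phi> - M ** C) *v xt 0 \<omega> + (\<Psi> - M ** D) *v w 0 \<omega>" for \<omega>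
    unfolding z_def zh_def xt_def by (rule observer_error_identity)
  have vt: "msqrt_inv S *v (w 0 \<omega> - L *v xt 0 \<omega>) = v 0 \<omega>" for \<omega>
    using msqrt_inv(4)[OF real(5)] by (simp add: w_gen matrix_vector_mul_assoc)
  have sqx: "square_integrable (xt k)" for k
    using x_meas xh_meas xt_L2 by (simp add: square_integrable_def xt_def)
  note noise = standard_white_noise[OF v_indep v_normal]
  note energy = stationary_lossless_feedback[OF real(1-4,6) xt_step[of 0] w_gen sqx sqx noise(1-3)
      causal xt_mean xt_cov]
  have "integrable Pr (\<lambda>\<omega>. (norm (z 0 \<omega> - zh 0 \<omega>))\<^sup>2)"
    using square_integrable_matrix_combination[OF sqx[of 0] energy(1), of "\<Phi> - M ** C" "\<Psi> - M ** D"]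
    by (simp add: zt square_integrable_def)
  moreover have "transpose (msqrt S) ** msqrt S = S" using msqrt_inv(1,2)[OF real(5)] by simp
  moreover have "spec_rad (A - K ** C) < 1" using K by (simp add: Kset_def)
  ultimately show ?thesis
    using energy(2,3) noise(1,4)
    by (intro conjI lossless_realization_inner[OF real(1-4)])
      (simp_all add: real(7) zt vt square_integrable_def)
qed

end
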